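(* Let $\Gamma$ be a connected signed graph on $N$ vertices. Then $\mathcal{M}(\Gamma(t))$ is a polynomial in $t$ of the form \[ \mathcal{M}(\Gamma(t))=\sum_{k=c(\Gamma_+)-1}^{N-c(\Gamma_-)} a_k(-t)^k,\qquad a_k=\sum_{T\in\mathcal{ST}_k(\Gamma)}|\pi(T)|, \] where all coefficients $a_k$ are non-negative, and the first and last coefficients $a_{c(\Gamma_+)-1}$ and $a_{N-c(\Gamma_-)}$ are strictly positive.
   Context: A signed graph $\Gamma$ is a finite simple undirected graph with vertex set $\{1,\dots,N\}$ in which every edge $\{i,j\}$ carries a nonzero real weight $\gamma_{ij}$, which may be of either sign. $\Gamma_+$ (resp. $\Gamma_-$) is the spanning subgraph on all vertices containing exactly the positively (resp. negatively) weighted edges; $c(H)$ is the number of connected components of a graph $H$. For real $t$, $\Gamma(t)$ is the weighted graph with the same edges as $\Gamma$ and weights $\gamma_{ij}(t)=\gamma_{ij}$ if $\gamma_{ij}>0$ and $\gamma_{ij}(t)=t\gamma_{ij}$ if $\gamma_{ij}<0$. For a tree $T$ with weighted edges, $\pi(T)=\prod_{\{i,j\}\in E(T)}\gamma_{ij}$ (product of weights of $\Gamma$). $\mathcal{ST}(\Gamma)$ is the set of spanning trees of $\Gamma$ and $\mathcal{ST}_k(\Gamma)$ the set of spanning trees having exactly $k$ edges in $\Gamma_-$. For a weighted graph $H$, $\mathcal{M}(H)=\sum_{T\in\mathcal{ST}(H)}\prod_{e\in E(T)}w_H(e)$, where $w_H$ denotes the weights of $H$; equivalently (Kirchhoff's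 weighted matrix tree theorem) $\mathcal{M}(H)=\frac{(-1)^{n-1}}{n}\prod_{i=2}^n\lambda_i$, where $n=|V(H)|$ and $\lambda_1=0,\lambda_2,\dots,\lambda_n$ are the eigenvalues of the Laplacian $\mathcal{L}(H)$ (off-diagonal entries the weights, diagonal entries minus the row sums of the weights). *)

theory Defs
  imports Main "HOL.Real"
begin

definition simple_graph :: "nat set \<Rightarrow> nat set set \<Rightarrow> bool" where
  "simple_graph V E \<longleftrightarrow> finite V \<and> E \<subseteq> {{u, v} | u v. u \<in> V \<and> v \<in> V \<and> u \<noteq> v}"

definition reach :: "nat set \<Rightarrow> nat set set \<Rightarrow> (nat \<times> nat) set" where
  "reach V F = {(u, v). u \<in> V \<and> v \<in> V \<and> {u, v} \<in> F}\<^sup>*"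

definition connected_graph :: "nat set \<Rightarrow> nat set set \<Rightarrow> bool" where
  "connected_graph V F \<longleftrightarrow> V \<noteq> {} \<and> (\<forall>u\<in>V. \<forall>v\<in>V. (u, v) \<in> reach V F)"

definition num_components :: "nat set \<Rightarrow> nat set set \<Rightarrow> nat" where
  "num_components V F = card (V // reach V F)"

text \<open>Spanning trees: edge subsets that are connected on all of V and acyclic
(no edge lies on a cycle, i.e. its endpoints are not joined after removing it).\<close>
definition spanning_trees :: "nat set \<Rightarrow> nat set set \<Rightarrow> nat set set set" where
  "spanning_trees V E = {T. T \<subseteq> E \<and> connected_graph V T \<and>
      (\<forall>e\<in>T. \<forall>u v. e = {u, v} \<longrightarrow> (u, v) \<notin> reach V (T - {e}))}"

definition pos_edges :: "nat set set \<Rightarrow> (nat set \<Rightarrow> real) \<Rightarrow> nat set set" where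
  "pos_edges E \<gamma> = {e \<in> E. \<gamma> e > 0}"

definition neg_edges :: "nat set set \<Rightarrow> (nat set \<Rightarrow> real) \<Rightarrow> nat set set" where
  "neg_edges E \<gamma> = {e \<in> E. \<gamma> e < 0}"

definition spanning_trees_k :: "nat set \<Rightarrow> nat set set \<Rightarrow> (nat set \<Rightarrow> real) \<Rightarrow> nat \<Rightarrow> nat set set set" where
  "spanning_trees_k V E \<gamma> k = {T \<in> spanning_trees V E. card (T \<inter> neg_edges E \<gamma>) = k}"

definition tree_weight :: "(nat set \<Rightarrow> real) \<Rightarrow> nat set set \<Rightarrow> real" where
  "tree_weight \<gamma> T = (\<Prod>e\<in>T. \<gamma> e)"

definition weight_t :: "(nat set \<Rightarrow> real) \<Rightarrow> real \<Rightarrow> nat set \<Rightarrow> real" where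
  "weight_t \<gamma> t e = (if \<gamma> e > 0 then \<gamma> e else t * \<gamma> e)"

definition tree_sum :: "nat set \<Rightarrow> nat set set \<Rightarrow> (nat set \<Rightarrow> real) \<Rightarrow> real" where
  "tree_sum V E w = (\<Sum>T\<in>spanning_trees V E. \<Prod>e\<in>T. w e)"

end

theory Submission
  imports Defs
begin

text \<open>Every spanning tree T splits into T \<inter> \<Gamma>+ and T \<inter> \<Gamma>-, both forests, and a forest F on
  the vertex set V satisfies c(F) + |F| = |V|. Since T \<inter> \<Gamma>\<pm> \<subseteq> \<Gamma>\<pm> has at least c(\<Gamma>\<pm>)
  components, the number k of negative edges of T lies between c(\<Gamma>+) - 1 and N - c(\<Gamma>-).
  Both bounds are attained: extending a maximal forest of \<Gamma>\<pm> to a spanning tree of \<Gamma> gives a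
  tree T with c(T \<inter> \<Gamma>\<pm>) = c(\<Gamma>\<pm>). Finally each tree contributes \<pi>(T) with its k negative
  factors multiplied by t, i.e. |\<pi>(T)| (-t)^k.\<close>

definition edges_within :: "nat set \<Rightarrow> nat set set \<Rightarrow> bool" where
  "edges_within V F \<longleftrightarrow> (\<forall>e\<in>F. \<exists>u v. u \<in> V \<and> v \<in> V \<and> e = {u, v})"

definition forest :: "nat set \<Rightarrow> nat set set \<Rightarrow> bool" where
  "forest V F \<longleftrightarrow> (\<forall>e\<in>F. \<forall>u v. e = {u, v} \<longrightarrow> (u, v) \<notin> reach V (F - {e}))"

lemma edges_within_insert:
  "edges_within V (insert e F) \<longleftrightarrow> (\<exists>u v. u \<in> V \<and> v \<in> V \<and> e = {u, v}) \<and> edges_within V F"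
  unfolding edges_within_def by auto

lemma edges_within_mono: "edges_within V G \<Longrightarrow> F \<subseteq> G \<Longrightarrow> edges_within V F"
  unfolding edges_within_def by auto

lemma edges_within_doubleton: "edges_within V F \<Longrightarrow> {u, v} \<in> F \<Longrightarrow> u \<in> V \<and> v \<in> V"
  unfolding edges_within_def by (auto simp: doubleton_eq_iff)

lemma finite_edges_within: "finite V \<Longrightarrow> edges_within V F \<Longrightarrow> finite F"
proof -
  assume "finite V" "edges_within V F"
  then have "F \<subseteq> Pow V" unfolding edges_within_def by auto
  then show "finite F" using \<open>finite V\<close> by (simp add: finite_subset)
qed

lemma simple_graph_edges_within:
  assumes "simple_graph V E"
  shows "edges_within V E"
  unfolding edges_within_def
proof
  fix e assume "e \<in> E"
  then show "\<exists>u v. u \<in> V \<and> v \<in> V \<and> e = {u, v}" using assms unfolding simple_graph_def by blast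
qed

section \<open>Reachability\<close>

lemma equiv_reach: "equiv UNIV (reach V F)"
proof -
  have "sym {(u, v). u \<in> V \<and> v \<in> V \<and> {u, v} \<in> F}"
    by (auto simp: sym_def insert_commute)
  then show ?thesis
    unfolding reach_def equiv_def using refl_rtrancl trans_rtrancl sym_rtrancl by auto
qed

lemma reach_refl [simp]: "(u, u) \<in> reach V F"
  unfolding reach_def by simp

lemma reach_sym: "(u, v) \<in> reach V F \<Longrightarrow> (v, u) \<in> reach V F"
  using equiv_reach[of V F] unfolding equiv_def by (meson symD)

lemma reach_trans: "(u, v) \<in> reach V F \<Longrightarrow> (v, w) \<in> reach V F \<Longrightarrow> (u, w) \<in> reach V F"
  unfolding reach_def by (meson rtrancl_trans)

lemma reach_edge: "u \<in> V \<Longrightarrow> v \<in> V \<Longrightarrow> {u, v} \<in> F \<Longrightarrow> (u, v) \<in> reach V F"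
  unfolding reach_def by (rule r_into_rtrancl) simp

lemma reach_mono: "F \<subseteq> G \<Longrightarrow> reach V F \<subseteq> reach V G"
  unfolding reach_def by (rule rtrancl_mono) auto

lemma reach_Image_eq_iff: "reach V F `` {x} = reach V F `` {y} \<longleftrightarrow> (x, y) \<in> reach V F"
  using eq_equiv_class_iff[OF equiv_reach] by simp

lemma reach_insert:
  assumes "a \<in> V" "b \<in> V"
  shows "reach V (insert {a, b} F) = reach V F \<union>
     {(x, y). (x, a) \<in> reach V F \<and> (b, y) \<in> reach V F \<or> (x, b) \<in> reach V F \<and> (a, y) \<in> reach V F}"
    (is "?L = ?R")
proof
  show "?L \<subseteq> ?R"
  proof (rule subrelI)
    fix x y assume "(x, y) \<in> ?L"
    then have "(x, y) \<in> {(u, v). u \<in> V \<and> v \<in> V \<and> {u, v} \<in> insert {a, b} F}\<^sup>*"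
      unfolding reach_def .
    then show "(x, y) \<in> ?R"
    proof (induction rule: rtrancl_induct)
      case base
      then show ?case by simp
    next
      case (step y z)
      then have yz: "y \<in> V" "z \<in> V" "{y, z} \<in> insert {a, b} F" by auto
      show ?case
      proof (cases "{y, z} \<in> F")
        case True
        then have "(y, z) \<in> reach V F" using yz reach_edge by blast
        then show ?thesis using step.IH reach_trans by blast
      next
        case False
        then have "y = a \<and> z = b \<or> y = b \<and> z = a" using yz by (auto simp: doubleton_eq_iff)
        then show ?thesis using step.IH reach_trans reach_refl by blast
      qed
    qed
  qed
next
  have ab: "(a, b) \<in> ?L" using assms reach_edge by blast
  have ba: "(b, a) \<in> ?L" using reach_sym[OF ab] .
  have "reach V F \<subseteq> ?L" by (rule reach_mono) auto
  then show "?R \<subseteq> ?L" using ab ba reach_trans by blast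
qed

lemma reach_insert_reachable:
  assumes "a \<in> V" "b \<in> V" "(a, b) \<in> reach V F"
  shows "reach V (insert {a, b} F) = reach V F"
proof -
  have "(b, a) \<in> reach V F" using assms(3) by (rule reach_sym)
  then have "(x, y) \<in> reach V F"
    if "(x, a) \<in> reach V F \<and> (b, y) \<in> reach V F \<or> (x, b) \<in> reach V F \<and> (a, y) \<in> reach V F" for x y
    using that assms(3) reach_trans by meson
  then show ?thesis unfolding reach_insert[OF assms(1,2)] by blast
qed

lemma reach_insert_new:
  assumes "a \<in> V" "b \<in> V" "H \<subseteq> F"
    and "(u, v) \<in> reach V (insert {a, b} H)" "(u, v) \<notin> reach V H" "(u, v) \<in> reach V F"
  shows "(a, b) \<in> reach V F"
proof -
  have "(u, a) \<in> reach V F \<and> (b, v) \<in> reach V F \<or> (u, b) \<in> reach V F \<and> (a, v) \<in> reach V F"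
    using assms(4,5) reach_mono[OF assms(3)] unfolding reach_insert[OF assms(1,2)] by blast
  then show ?thesis using assms(6) reach_sym reach_trans by meson
qed

lemma reach_insert_Image:
  assumes "a \<in> V" "b \<in> V" "(a, b) \<notin> reach V F"
  shows "reach V (insert {a, b} F) `` {x} =
    (if (x, a) \<in> reach V F \<or> (x, b) \<in> reach V F
     then reach V F `` {a} \<union> reach V F `` {b} else reach V F `` {x})"
proof -
  define R where "R = reach V F"
  have R': "reach V (insert {a, b} F) =
      R \<union> {(x, y). (x, a) \<in> R \<and> (b, y) \<in> R \<or> (x, b) \<in> R \<and> (a, y) \<in> R}"
    unfolding R_def by (rule reach_insert[OF assms(1,2)])
  have tr: "\<And>x y z. (x, y) \<in> R \<Longrightarrow> (y, z) \<in> R \<Longrightarrow> (x, z) \<in> R"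
    unfolding R_def by (rule reach_trans)
  have sy: "\<And>x y. (x, y) \<in> R \<Longrightarrow> (y, x) \<in> R"
    unfolding R_def by (rule reach_sym)
  have ab: "(a, b) \<notin> R" using assms(3) unfolding R_def .
  show ?thesis
  proof (cases "(x, a) \<in> R \<or> (x, b) \<in> R")
    case True
    have "(x, y) \<in> reach V (insert {a, b} F) \<longleftrightarrow> (a, y) \<in> R \<or> (b, y) \<in> R" for y
    proof (cases "(x, a) \<in> R")
      case xa: True
      then have "(x, b) \<notin> R" using tr sy ab by blast
      moreover have "(x, y) \<in> R \<longleftrightarrow> (a, y) \<in> R" using xa tr sy by blast
      ultimately show ?thesis unfolding R' using xa by blast
    next
      case xa: False
      then have xb: "(x, b) \<in> R" using True by simp
      have "(x, y) \<in> R \<longleftrightarrow> (b, y) \<in> R" using xb tr sy by blast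
      then show ?thesis unfolding R' using xa xb by blast
    qed
    then show ?thesis using True unfolding R_def by auto
  next
    case False
    then show ?thesis unfolding R' R_def by auto
  qed
qed

section \<open>Counting components\<close>

lemma num_components_empty: "num_components V {} = card V"
proof -
  have "V // reach V {} = (\<lambda>x. {x}) ` V" unfolding reach_def quotient_def by auto
  then show ?thesis unfolding num_components_def by (simp add: card_image)
qed

lemma quotient_reach_insert:
  assumes "a \<in> V" "b \<in> V" "(a, b) \<notin> reach V F"
  defines "A \<equiv> reach V F `` {a}" and "B \<equiv> reach V F `` {b}"
  shows "V // reach V (insert {a, b} F) = insert (A \<union> B) (V // reach V F - {A, B})"
proof (intro equalityI subsetI)
  fix X assume "X \<in> V // reach V (insert {a, b} F)"
  then obtain x where "x \<in> V" "X = reach V (insert {a, b} F) `` {x}" by (auto elim: quotientE)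
  then show "X \<in> insert (A \<union> B) (V // reach V F - {A, B})"
    unfolding reach_insert_Image[OF assms(1-3)] A_def B_def
    by (auto simp: reach_Image_eq_iff intro: quotientI)
next
  fix X assume X: "X \<in> insert (A \<union> B) (V // reach V F - {A, B})"
  show "X \<in> V // reach V (insert {a, b} F)"
  proof (cases "X = A \<union> B")
    case True
    then have "X = reach V (insert {a, b} F) `` {a}"
      unfolding reach_insert_Image[OF assms(1-3)] A_def B_def by simp
    then show ?thesis using assms(1) by (auto intro: quotientI)
  next
    case False
    then obtain x where "x \<in> V" "X = reach V F `` {x}" "X \<noteq> A" "X \<noteq> B"
      using X by (auto elim: quotientE)
    then have "X = reach V (insert {a, b} F) `` {x}"
      unfolding reach_insert_Image[OF assms(1-3)] A_def B_def by (auto simp: reach_Image_eq_iff)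
    then show ?thesis using \<open>x \<in> V\<close> by (auto intro: quotientI)
  qed
qed

lemma num_components_insert_unreachable:
  assumes "finite V" "a \<in> V" "b \<in> V" "(a, b) \<notin> reach V F"
  shows "num_components V (insert {a, b} F) + 1 = num_components V F"
proof -
  define A where "A = reach V F `` {a}"
  define B where "B = reach V F `` {b}"
  have fin: "finite (V // reach V F)" unfolding quotient_def using assms(1) by simp
  have AB: "A \<in> V // reach V F" "B \<in> V // reach V F" "A \<noteq> B"
    using assms(2-4) reach_Image_eq_iff unfolding A_def B_def by (auto intro: quotientI)
  have "A \<union> B \<notin> V // reach V F"
  proof
    assume "A \<union> B \<in> V // reach V F"
    then obtain x where x: "A \<union> B = reach V F `` {x}" by (rule quotientE)
    have "a \<in> A" "b \<in> B" unfolding A_def B_def by simp_all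
    then have "(x, a) \<in> reach V F" "(x, b) \<in> reach V F" using x by auto
    then show False using assms(4) reach_sym reach_trans by blast
  qed
  then have "card (V // reach V (insert {a, b} F)) = card (V // reach V F - {A, B}) + 1"
    using quotient_reach_insert[OF assms(2-4)] fin unfolding A_def B_def by simp
  also have "card (V // reach V F - {A, B}) = card (V // reach V F) - 2"
    using AB fin by (simp add: card_Diff_subset)
  finally show ?thesis
    using AB fin card_mono[OF fin, of "{A, B}"] unfolding num_components_def by simp
qed

lemma num_components_insert_le:
  assumes "finite V" "a \<in> V" "b \<in> V"
  shows "num_components V (insert {a, b} F) \<le> num_components V F"
proof (cases "(a, b) \<in> reach V F")
  case True
  then show ?thesis unfolding num_components_def reach_insert_reachable[OF assms(2,3) True] by simp
next
  case False
  then show ?thesis using num_components_insert_unreachable[OF assms, of F] by simp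
qed

lemma num_components_antimono:
  assumes "finite V" "edges_within V G" "F \<subseteq> G"
  shows "num_components V G \<le> num_components V F"
proof -
  have "num_components V (F \<union> D) \<le> num_components V F" if "finite D" "edges_within V D" for D
    using that
  proof (induction D rule: finite_induct)
    case (insert e D)
    then obtain a b where ab: "a \<in> V" "b \<in> V" "e = {a, b}" and D: "edges_within V D"
      by (auto simp: edges_within_insert)
    have "num_components V (F \<union> insert e D) \<le> num_components V (F \<union> D)"
      using num_components_insert_le[OF assms(1) ab(1,2), of "F \<union> D"] ab(3) by simp
    then show ?case using insert.IH[OF D] by linarith
  qed simp
  moreover have "finite (G - F)" "edges_within V (G - F)"
    using finite_edges_within[OF assms(1,2)] edges_within_mono[OF assms(2)] by auto
  moreover have "F \<union> (G - F) = G" using assms(3) by auto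
  ultimately show ?thesis by metis
qed

lemma connected_graph_iff_num_components:
  assumes "V \<noteq> {}"
  shows "connected_graph V F \<longleftrightarrow> num_components V F = 1"
proof
  assume c: "connected_graph V F"
  obtain v where v: "v \<in> V" using assms by blast
  have "V // reach V F = {reach V F `` {v}}"
  proof
    show "V // reach V F \<subseteq> {reach V F `` {v}}"
    proof
      fix X assume "X \<in> V // reach V F"
      then obtain x where "x \<in> V" "X = reach V F `` {x}" by (rule quotientE) auto
      then show "X \<in> {reach V F `` {v}}"
        using c v reach_Image_eq_iff unfolding connected_graph_def by blast
    qed
  next
    show "{reach V F `` {v}} \<subseteq> V // reach V F" using v by (auto intro: quotientI)
  qed
  then show "num_components V F = 1" unfolding num_components_def by simp
next
  assume "num_components V F = 1"
  then obtain X where X: "V // reach V F = {X}" unfolding num_components_def by (rule card_1_singletonE)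
  have "(u, v) \<in> reach V F" if "u \<in> V" "v \<in> V" for u v
  proof -
    have "reach V F `` {u} \<in> V // reach V F" "reach V F `` {v} \<in> V // reach V F"
      using that by (auto intro: quotientI)
    then have "reach V F `` {u} = reach V F `` {v}" using X by simp
    then show ?thesis by (simp add: reach_Image_eq_iff)
  qed
  then show "connected_graph V F" unfolding connected_graph_def using assms by simp
qed

section \<open>Forests\<close>

lemma forest_empty [simp]: "forest V {}"
  unfolding forest_def by simp

lemma forest_subset:
  assumes "forest V G" "F \<subseteq> G" shows "forest V F"
  unfolding forest_def
proof (intro ballI allI impI)
  fix e u v assume e: "e \<in> F" "e = {u, v}"
  then have "(u, v) \<notin> reach V (G - {e})" using assms unfolding forest_def by blast
  moreover have "reach V (F - {e}) \<subseteq> reach V (G - {e})" using assms(2) by (intro reach_mono) auto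
  ultimately show "(u, v) \<notin> reach V (F - {e})" by blast
qed

lemma forest_insert_iff:
  assumes ab: "a \<in> V" "b \<in> V" and nin: "{a, b} \<notin> F" and F: "edges_within V F"
  shows "forest V (insert {a, b} F) \<longleftrightarrow> forest V F \<and> (a, b) \<notin> reach V F"
proof
  assume h: "forest V (insert {a, b} F)"
  have "(a, b) \<notin> reach V (insert {a, b} F - {{a, b}})" using h unfolding forest_def by blast
  moreover have "insert {a, b} F - {{a, b}} = F" using nin by auto
  ultimately show "forest V F \<and> (a, b) \<notin> reach V F" using forest_subset[OF h] by auto
next
  assume h: "forest V F \<and> (a, b) \<notin> reach V F"
  show "forest V (insert {a, b} F)"
    unfolding forest_def
  proof (intro ballI allI impI)
    fix e u v assume e: "e \<in> insert {a, b} F" and uv: "e = {u, v}"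
    show "(u, v) \<notin> reach V (insert {a, b} F - {e})"
    proof (cases "e = {a, b}")
      case True
      then have eq: "insert {a, b} F - {e} = F" using nin by auto
      have "u = a \<and> v = b \<or> u = b \<and> v = a" using True uv by (auto simp: doubleton_eq_iff)
      then show ?thesis unfolding eq using h reach_sym by blast
    next
      case False
      then have eF: "e \<in> F" and eq: "insert {a, b} F - {e} = insert {a, b} (F - {e})"
        using e by auto
      have "u \<in> V" "v \<in> V" using edges_within_doubleton[OF F] eF uv by auto
      then have "(u, v) \<in> reach V F" using reach_edge eF uv by blast
      moreover have "(u, v) \<notin> reach V (F - {e})" using h eF uv unfolding forest_def by blast
      ultimately show ?thesis
        unfolding eq using reach_insert_new[OF ab Diff_subset] h by metis
    qed
  qed
qed

text \<open>Each new edge either joins two components or lies in one and closes a cycle.\<close>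

lemma num_components_plus_card:
  assumes "finite V" "finite F" "edges_within V F"
  shows "card V \<le> num_components V F + card F \<and> (forest V F \<longleftrightarrow> num_components V F + card F = card V)"
  using assms(2,3)
proof (induction F rule: finite_induct)
  case empty
  then show ?case by (simp add: num_components_empty)
next
  case (insert e F)
  then obtain a b where ab: "a \<in> V" "b \<in> V" "e = {a, b}" and F: "edges_within V F"
    by (auto simp: edges_within_insert)
  have forest: "forest V (insert e F) \<longleftrightarrow> forest V F \<and> (a, b) \<notin> reach V F"
    using forest_insert_iff[OF ab(1,2) _ F] insert.hyps ab by simp
  show ?case
  proof (cases "(a, b) \<in> reach V F")
    case True
    then have "num_components V (insert e F) = num_components V F"
      using reach_insert_reachable[OF ab(1,2)] ab unfolding num_components_def by simp
    then show ?thesis using insert F forest True by simp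
  next
    case False
    then have count: "num_components V (insert e F) + card (insert e F) = num_components V F + card F"
      using num_components_insert_unreachable[OF assms(1) ab(1,2)] ab insert.hyps by simp
    show ?thesis unfolding count using insert.IH[OF F] forest False by simp
  qed
qed

lemma forest_num_components_plus_card:
  "finite V \<Longrightarrow> edges_within V F \<Longrightarrow> forest V F \<Longrightarrow> num_components V F + card F = card V"
  using num_components_plus_card finite_edges_within by blast

text \<open>A forest of maximal size inside G cannot be enlarged by any edge of G, so it
  already joins the endpoints of every edge of G.\<close>

lemma forest_extends_to_spanning_forest:
  assumes "finite V" "edges_within V G" "A \<subseteq> G" "forest V A"
  shows "\<exists>B. A \<subseteq> B \<and> B \<subseteq> G \<and> forest V B \<and> reach V B = reach V G"
proof -
  define S where "S = {B. A \<subseteq> B \<and> B \<subseteq> G \<and> forest V B}"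
  have finG: "finite G" using assms(1,2) by (rule finite_edges_within)
  have "\<exists>B. B \<in> S \<and> (\<forall>B'. B' \<in> S \<longrightarrow> card B' \<le> card B)"
  proof (rule Lattices_Big.ex_has_greatest_nat[where k = A and b = "card G + 1"])
    show "A \<in> S" unfolding S_def using assms(3,4) by simp
    show "\<forall>B. B \<in> S \<longrightarrow> card B < card G + 1"
      unfolding S_def using card_mono[OF finG] by (simp add: less_Suc_eq_le)
  qed
  then obtain B where B: "B \<in> S" and max: "\<And>B'. B' \<in> S \<Longrightarrow> card B' \<le> card B"
    by blast
  have BG: "B \<subseteq> G" and AB: "A \<subseteq> B" and forestB: "forest V B" using B unfolding S_def by auto
  have "(u, v) \<in> reach V B" if uv: "u \<in> V" "v \<in> V" "{u, v} \<in> G" for u v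
  proof (rule ccontr)
    assume nr: "(u, v) \<notin> reach V B"
    then have new: "{u, v} \<notin> B" using reach_edge uv by blast
    have "edges_within V B" using assms(2) BG by (rule edges_within_mono)
    then have "forest V (insert {u, v} B)"
      using forest_insert_iff[OF uv(1,2) new] forestB nr by simp
    then have "insert {u, v} B \<in> S" using AB BG uv(3) unfolding S_def by auto
    then have "card (insert {u, v} B) \<le> card B" by (rule max)
    moreover have "card (insert {u, v} B) = card B + 1"
      using new finite_subset[OF BG finG] by simp
    ultimately show False by simp
  qed
  then have "{(u, v). u \<in> V \<and> v \<in> V \<and> {u, v} \<in> G} \<subseteq> reach V B" by blast
  then have "reach V G \<subseteq> reach V B"
    unfolding reach_def by (rule rtrancl_subset_rtrancl)
  then have "reach V B = reach V G" using reach_mono[OF BG] by blast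
  then show ?thesis using AB BG forestB by blast
qed

section \<open>Spanning trees\<close>

lemma spanning_trees_eq: "spanning_trees V E = {T. T \<subseteq> E \<and> connected_graph V T \<and> forest V T}"
  unfolding spanning_trees_def forest_def by simp

lemma finite_spanning_trees:
  assumes "finite V" "edges_within V E"
  shows "finite (spanning_trees V E)"
proof (rule finite_subset)
  show "spanning_trees V E \<subseteq> Pow E" unfolding spanning_trees_def by auto
  show "finite (Pow E)" using finite_edges_within[OF assms] by simp
qed

lemma card_spanning_tree:
  assumes "finite V" "edges_within V E" "T \<in> spanning_trees V E"
  shows "card T + 1 = card V"
proof -
  have T: "T \<subseteq> E" "connected_graph V T" "forest V T" using assms(3) spanning_trees_eq by auto
  moreover have "V \<noteq> {}" using T(2) unfolding connected_graph_def by simp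
  ultimately have "num_components V T = 1" using connected_graph_iff_num_components by blast
  then show ?thesis
    using forest_num_components_plus_card[OF assms(1) edges_within_mono[OF assms(2) T(1)] T(3)] by simp
qed

lemma num_components_inter_spanning_tree:
  assumes "finite V" "edges_within V E" "T \<in> spanning_trees V E"
  shows "num_components V (T \<inter> G) + card (T \<inter> G) = card V"
proof -
  have "T \<subseteq> E" "forest V T" using assms(3) spanning_trees_eq by auto
  then have "edges_within V (T \<inter> G)" "forest V (T \<inter> G)"
    using edges_within_mono[OF assms(2), of "T \<inter> G"] forest_subset[of V T "T \<inter> G"] by auto
  then show ?thesis using forest_num_components_plus_card[OF assms(1)] by blast
qed

lemma exists_spanning_tree_num_components_inter:
  assumes "finite V" "edges_within V E" "connected_graph V E" "G \<subseteq> E"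
  shows "\<exists>T\<in>spanning_trees V E. num_components V (T \<inter> G) = num_components V G"
proof -
  have G: "edges_within V G" using assms(2,4) by (rule edges_within_mono)
  obtain A where A: "A \<subseteq> G" "forest V A" "reach V A = reach V G"
    using forest_extends_to_spanning_forest[OF assms(1) G, of "{}"] by auto
  then obtain T where T: "A \<subseteq> T" "T \<subseteq> E" "forest V T" "reach V T = reach V E"
    using forest_extends_to_spanning_forest[OF assms(1,2), of A] assms(4) by auto
  have "connected_graph V T" using assms(3) T(4) unfolding connected_graph_def by simp
  then have "T \<in> spanning_trees V E" using T spanning_trees_eq by simp
  moreover have "num_components V G \<le> num_components V (T \<inter> G)"
    using num_components_antimono[OF assms(1) G] by simp
  moreover have "num_components V (T \<inter> G) \<le> num_components V A"
    using num_components_antimono[OF assms(1)] edges_within_mono[OF G] A(1) T(1) by simp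
  moreover have "num_components V A = num_components V G" unfolding num_components_def A(3) ..
  ultimately show ?thesis by (intro bexI) auto
qed

section \<open>Signed graphs\<close>

lemma card_pos_plus_card_neg:
  assumes "finite T" "T \<subseteq> E" "\<forall>e\<in>E. \<gamma> e \<noteq> 0"
  shows "card (T \<inter> pos_edges E \<gamma>) + card (T \<inter> neg_edges E \<gamma>) = card T"
proof -
  have "T = (T \<inter> pos_edges E \<gamma>) \<union> (T \<inter> neg_edges E \<gamma>)"
    using assms(2,3) unfolding pos_edges_def neg_edges_def by (auto simp: linorder_neq_iff)
  moreover have "(T \<inter> pos_edges E \<gamma>) \<inter> (T \<inter> neg_edges E \<gamma>) = {}"
    unfolding pos_edges_def neg_edges_def by auto
  ultimately show ?thesis using assms(1) by (metis card_Un_disjoint finite_Int)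
qed

lemma prod_weight_t:
  assumes "T \<subseteq> E" "finite T" "\<forall>e\<in>E. \<gamma> e \<noteq> 0"
  shows "(\<Prod>e\<in>T. weight_t \<gamma> t e) = \<bar>tree_weight \<gamma> T\<bar> * (- t) ^ card (T \<inter> neg_edges E \<gamma>)"
proof -
  have "weight_t \<gamma> t e = (if e \<in> neg_edges E \<gamma> then - t else 1) * \<bar>\<gamma> e\<bar>" if "e \<in> T" for e
    using that assms(1,3) unfolding weight_t_def neg_edges_def by auto
  then have "(\<Prod>e\<in>T. weight_t \<gamma> t e) = (\<Prod>e\<in>T. if e \<in> neg_edges E \<gamma> then - t else 1) * (\<Prod>e\<in>T. \<bar>\<gamma> e\<bar>)"
    by (simp add: prod.distrib)
  also have "(\<Prod>e\<in>T. if e \<in> neg_edges E \<gamma> then - t else 1) = (- t) ^ card (T \<inter> neg_edges E \<gamma>)"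
    using prod.If_cases[OF assms(2), of "\<lambda>e. e \<in> neg_edges E \<gamma>" "\<lambda>_. - t" "\<lambda>_. 1"] by simp
  also have "(\<Prod>e\<in>T. \<bar>\<gamma> e\<bar>) = \<bar>tree_weight \<gamma> T\<bar>"
    unfolding tree_weight_def by (simp add: abs_prod)
  finally show ?thesis by simp
qed

locale signed_graph =
  fixes V :: "nat set" and E :: "nat set set" and \<gamma> :: "nat set \<Rightarrow> real"
  assumes finite_V: "finite V" and edges_within: "edges_within V E"
    and nonzero: "\<forall>e\<in>E. \<gamma> e \<noteq> 0"
begin

lemma spanning_tree_finite_subset: "T \<in> spanning_trees V E \<Longrightarrow> T \<subseteq> E \<and> finite T"
  using finite_edges_within[OF finite_V edges_within] spanning_trees_eq by (auto intro: finite_subset)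

text \<open>Both bounds come from c(T \<inter> G) + |T \<inter> G| = |V| for G = \<Gamma>+, \<Gamma>-, together with
  c(T \<inter> G) \<ge> c(G).\<close>

lemma spanning_tree_card_neg_bounds:
  assumes "T \<in> spanning_trees V E"
  shows "num_components V (pos_edges E \<gamma>) - 1 \<le> card (T \<inter> neg_edges E \<gamma>)"
    and "card (T \<inter> neg_edges E \<gamma>) \<le> card V - num_components V (neg_edges E \<gamma>)"
proof -
  have T: "T \<subseteq> E" "finite T" using spanning_tree_finite_subset[OF assms] by auto
  have "num_components V (pos_edges E \<gamma>) \<le> num_components V (T \<inter> pos_edges E \<gamma>)"
    "num_components V (neg_edges E \<gamma>) \<le> num_components V (T \<inter> neg_edges E \<gamma>)"
    using num_components_antimono[OF finite_V] edges_within_mono[OF edges_within]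
    unfolding pos_edges_def neg_edges_def by auto
  moreover have "num_components V (T \<inter> pos_edges E \<gamma>) + card (T \<inter> pos_edges E \<gamma>) = card V"
    "num_components V (T \<inter> neg_edges E \<gamma>) + card (T \<inter> neg_edges E \<gamma>) = card V"
    using num_components_inter_spanning_tree[OF finite_V edges_within assms] by simp_all
  moreover have "card T + 1 = card V"
    using card_spanning_tree[OF finite_V edges_within assms] .
  moreover have "card (T \<inter> pos_edges E \<gamma>) + card (T \<inter> neg_edges E \<gamma>) = card T"
    using card_pos_plus_card_neg[OF T(2,1) nonzero] .
  ultimately show "num_components V (pos_edges E \<gamma>) - 1 \<le> card (T \<inter> neg_edges E \<gamma>)"
    and "card (T \<inter> neg_edges E \<gamma>) \<le> card V - num_components V (neg_edges E \<gamma>)"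
    by linarith+
qed

lemma exists_spanning_tree_card_neg_min:
  assumes "connected_graph V E"
  shows "\<exists>T\<in>spanning_trees V E. card (T \<inter> neg_edges E \<gamma>) = num_components V (pos_edges E \<gamma>) - 1"
proof -
  have "pos_edges E \<gamma> \<subseteq> E" unfolding pos_edges_def by auto
  then obtain T where T: "T \<in> spanning_trees V E"
    and c: "num_components V (T \<inter> pos_edges E \<gamma>) = num_components V (pos_edges E \<gamma>)"
    using exists_spanning_tree_num_components_inter[OF finite_V edges_within assms] by blast
  have "card (T \<inter> pos_edges E \<gamma>) + card (T \<inter> neg_edges E \<gamma>) + 1 = card V"
    using spanning_tree_finite_subset[OF T] card_pos_plus_card_neg nonzero card_spanning_tree[OF finite_V edges_within T]
    by simp
  moreover have "num_components V (T \<inter> pos_edges E \<gamma>) + card (T \<inter> pos_edges E \<gamma>) = card V"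
    using num_components_inter_spanning_tree[OF finite_V edges_within T] .
  ultimately show ?thesis using T c by (intro bexI[of _ T]) linarith+
qed

lemma exists_spanning_tree_card_neg_max:
  assumes "connected_graph V E"
  shows "\<exists>T\<in>spanning_trees V E. card (T \<inter> neg_edges E \<gamma>) = card V - num_components V (neg_edges E \<gamma>)"
proof -
  have "neg_edges E \<gamma> \<subseteq> E" unfolding neg_edges_def by auto
  then obtain T where T: "T \<in> spanning_trees V E"
    and "num_components V (T \<inter> neg_edges E \<gamma>) = num_components V (neg_edges E \<gamma>)"
    using exists_spanning_tree_num_components_inter[OF finite_V edges_within assms] by blast
  moreover have "num_components V (T \<inter> neg_edges E \<gamma>) + card (T \<inter> neg_edges E \<gamma>) = card V"
    using num_components_inter_spanning_tree[OF finite_V edges_within T] .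
  ultimately show ?thesis by (intro bexI[of _ T]) linarith+
qed

lemma tree_sum_weight_t_eq:
  assumes "\<forall>T\<in>spanning_trees V E. card (T \<inter> neg_edges E \<gamma>) \<in> {l..h}"
  shows "tree_sum V E (weight_t \<gamma> t) =
    (\<Sum>k = l..h. (\<Sum>T\<in>spanning_trees_k V E \<gamma> k. \<bar>tree_weight \<gamma> T\<bar>) * (- t) ^ k)"
proof -
  have "tree_sum V E (weight_t \<gamma> t) =
      (\<Sum>T\<in>spanning_trees V E. \<bar>tree_weight \<gamma> T\<bar> * (- t) ^ card (T \<inter> neg_edges E \<gamma>))"
    unfolding tree_sum_def
    using prod_weight_t spanning_tree_finite_subset nonzero by (intro sum.cong) blast+
  also have "\<dots> = (\<Sum>k = l..h. \<Sum>T\<in>spanning_trees_k V E \<gamma> k.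
      \<bar>tree_weight \<gamma> T\<bar> * (- t) ^ card (T \<inter> neg_edges E \<gamma>))"
    unfolding spanning_trees_k_def
    by (rule sum.group[symmetric]) (use finite_spanning_trees[OF finite_V edges_within] assms in auto)
  also have "\<dots> = (\<Sum>k = l..h. (\<Sum>T\<in>spanning_trees_k V E \<gamma> k. \<bar>tree_weight \<gamma> T\<bar>) * (- t) ^ k)"
    unfolding spanning_trees_k_def by (simp add: sum_distrib_right)
  finally show ?thesis .
qed

lemma sum_abs_tree_weight_pos:
  assumes "T \<in> spanning_trees_k V E \<gamma> k"
  shows "0 < (\<Sum>T\<in>spanning_trees_k V E \<gamma> k. \<bar>tree_weight \<gamma> T\<bar>)"
proof (rule sum_pos2[OF _ assms])
  show "finite (spanning_trees_k V E \<gamma> k)"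
    using finite_spanning_trees[OF finite_V edges_within] unfolding spanning_trees_k_def by simp
  have "T \<subseteq> E" "finite T" using assms spanning_tree_finite_subset unfolding spanning_trees_k_def by auto
  then show "0 < \<bar>tree_weight \<gamma> T\<bar>" using nonzero unfolding tree_weight_def by auto
qed simp

end

theorem mainTheorem3:
  fixes N :: nat and E :: "nat set set" and \<gamma> :: "nat set \<Rightarrow> real"
  assumes "simple_graph {1..N} E"
    and "\<forall>e\<in>E. \<gamma> e \<noteq> 0"
    and "connected_graph {1..N} E"
  defines "a \<equiv> (\<lambda>k. \<Sum>T\<in>spanning_trees_k {1..N} E \<gamma> k. \<bar>tree_weight \<gamma> T\<bar>)"
  shows "(\<forall>t::real. tree_sum {1..N} E (weight_t \<gamma> t) =
            (\<Sum>k = num_components {1..N} (pos_edges E \<gamma>) - 1 .. N - num_components {1..N} (neg_edges E \<gamma>).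
               a k * (- t) ^ k))
       \<and> (\<forall>k. a k \<ge> 0)
       \<and> a (num_components {1..N} (pos_edges E \<gamma>) - 1) > 0
       \<and> a (N - num_components {1..N} (neg_edges E \<gamma>)) > 0"
proof -
  interpret signed_graph "{1..N}" E \<gamma>
    using assms(1,2) simple_graph_edges_within by unfold_locales auto
  have "tree_sum {1..N} E (weight_t \<gamma> t) =
      (\<Sum>k = num_components {1..N} (pos_edges E \<gamma>) - 1 .. N - num_components {1..N} (neg_edges E \<gamma>).
         a k * (- t) ^ k)" for t
    unfolding a_def using spanning_tree_card_neg_bounds by (intro tree_sum_weight_t_eq) simp
  moreover have "a k \<ge> 0" for k unfolding a_def by (simp add: sum_nonneg)
  moreover have "a k > 0" if "\<exists>T\<in>spanning_trees {1..N} E. card (T \<inter> neg_edges E \<gamma>) = k" for k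
    using that sum_abs_tree_weight_pos unfolding a_def spanning_trees_k_def by blast
  ultimately show ?thesis
    using exists_spanning_tree_card_neg_min[OF assms(3)] exists_spanning_tree_card_neg_max[OF assms(3)]
    by simp
qed

end
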